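(* Let $\hat v\in\{0,1\}^{\mathcal T}$ be the indicator vector of a proper triple set, and let $(\lambda,\mu)$ be an optimal solution of the linear program $\mathrm{D}(\hat v)$ such that $\lambda_{t,1}=\lambda_{t,2}=\lambda_{t,3}=0$ for every $t$ with $\hat v_t=0$. Then $\lambda_{t,3}\le\eta$ for all $t\in\mathcal T$ and $\mu_J\le\eta$ for all $J\in\mathcal N$, where $\eta=-\sum_{i=1}^m\min(0,\alpha_i)$.
   Context: A multilinear program has data $n,m$, coefficients $\alpha_i\in\mathbb{R}$ and nonempty index sets $J_i\subseteq[n]$. Let $\mathcal N=\bigcup_i\{J:\emptyset\ne J\subseteq J_i\}$ and $\beta_J=\sum_{i:J_i=J}\alpha_i$. A triple is $t=(J,J',J'')$ with $J''\in\mathcal N$, $|J''|\ge2$, $J,J'$ nonempty, disjoint, $J\cup J'=J''$, listed with $J,J'$ in lexicographic order; $\mathsf{tail1}(t)=J$, $\mathsf{tail2}(t)=J'$, $\mathsf{head}(t)=J''$; $\mathcal T$ is the set of all triples. A proper triple set is a set $T\subseteq\mathcal T$ containing a subset $T'$ such that (1) every $J_i$ with $|J_i|>1$ is the head of some triple in $T'$, and (2) whenever a set $J$ with $|J|>1$ is the first or second element of a triple in $T'$, $J$ is the head of a different triple in $T'$; its indicator vector has $\hat v_t=1$ iff $t\in T$. $\mathrm{D}(\hat v)$: maximize $-\sum_{t\in\mathcal T}[(1-\hat v_t)(\lambda_{t,1}+\lambda_{t,2})+(2-\hat v_t)\lambda_{t,3}]-\sum_{J\in\mathcal N}\mu_J$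 over $\lambda\ge0,\mu\ge0$ subject to, for every $J\in\mathcal N$, $\beta_J+\sum_{t:\mathsf{tail1}(t)=J}(-\lambda_{t,1}+\lambda_{t,3})+\sum_{t:\mathsf{tail2}(t)=J}(-\lambda_{t,2}+\lambda_{t,3})+\sum_{t:\mathsf{head}(t)=J}(\lambda_{t,1}+\lambda_{t,2}-\lambda_{t,3})+\mu_J\ge0$. *)

theory Defs
  imports Complex_Main
begin

text \<open>Data of a multilinear program: indices i range over {1..m}, variables over [n] = {1..n};
  coefficients alpha i and index sets Js i.\<close>

type_synonym triple = "nat set \<times> nat set \<times> nat set"

definition tail1 :: "triple \<Rightarrow> nat set" where "tail1 t = fst t"
definition tail2 :: "triple \<Rightarrow> nat set" where "tail2 t = fst (snd t)"
definition head  :: "triple \<Rightarrow> nat set" where "head t = snd (snd t)"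

definition NN :: "nat \<Rightarrow> (nat \<Rightarrow> nat set) \<Rightarrow> nat set set" where
  "NN m Js = (\<Union>i\<in>{1..m}. {J. J \<noteq> {} \<and> J \<subseteq> Js i})"

definition beta :: "nat \<Rightarrow> (nat \<Rightarrow> real) \<Rightarrow> (nat \<Rightarrow> nat set) \<Rightarrow> nat set \<Rightarrow> real" where
  "beta m alpha Js J = (\<Sum>i\<in>{i\<in>{1..m}. Js i = J}. alpha i)"

definition set_lex_less :: "nat set \<Rightarrow> nat set \<Rightarrow> bool" where
  "set_lex_less A B \<longleftrightarrow> (sorted_list_of_set A, sorted_list_of_set B) \<in> lexord {(a, b). a < b}"

definition TT :: "nat \<Rightarrow> (nat \<Rightarrow> nat set) \<Rightarrow> triple set" where
  "TT m Js = {(J, J', J''). J'' \<in> NN m Js \<and> card J'' \<ge> 2 \<and> J \<noteq> {} \<and> J' \<noteq> {}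
      \<and> J \<inter> J' = {} \<and> J \<union> J' = J'' \<and> set_lex_less J J'}"

definition proper_triple_set :: "nat \<Rightarrow> (nat \<Rightarrow> nat set) \<Rightarrow> triple set \<Rightarrow> bool" where
  "proper_triple_set m Js T \<longleftrightarrow> T \<subseteq> TT m Js \<and>
     (\<exists>T' \<subseteq> T.
        (\<forall>i\<in>{1..m}. card (Js i) > 1 \<longrightarrow> (\<exists>t\<in>T'. head t = Js i)) \<and>
        (\<forall>t\<in>T'. \<forall>J\<in>{tail1 t, tail2 t}. card J > 1 \<longrightarrow> (\<exists>t'\<in>T'. t' \<noteq> t \<and> head t' = J)))"

definition D_feasible :: "nat \<Rightarrow> (nat \<Rightarrow> real) \<Rightarrow> (nat \<Rightarrow> nat set)
    \<Rightarrow> (triple \<Rightarrow> nat \<Rightarrow> real) \<Rightarrow> (nat set \<Rightarrow> real) \<Rightarrow> bool" where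
  "D_feasible m alpha Js lam mu \<longleftrightarrow>
     (\<forall>t\<in>TT m Js. \<forall>k\<in>{1,2,3}. lam t k \<ge> 0) \<and> (\<forall>J\<in>NN m Js. mu J \<ge> 0) \<and>
     (\<forall>J\<in>NN m Js.
        beta m alpha Js J
        + (\<Sum>t\<in>{t\<in>TT m Js. tail1 t = J}. - lam t 1 + lam t 3)
        + (\<Sum>t\<in>{t\<in>TT m Js. tail2 t = J}. - lam t 2 + lam t 3)
        + (\<Sum>t\<in>{t\<in>TT m Js. head t = J}. lam t 1 + lam t 2 - lam t 3)
        + mu J \<ge> 0)"

definition D_obj :: "nat \<Rightarrow> (nat \<Rightarrow> nat set) \<Rightarrow> (triple \<Rightarrow> real)
    \<Rightarrow> (triple \<Rightarrow> nat \<Rightarrow> real) \<Rightarrow> (nat set \<Rightarrow> real) \<Rightarrow> real" where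
  "D_obj m Js vhat lam mu =
     - (\<Sum>t\<in>TT m Js. (1 - vhat t) * (lam t 1 + lam t 2) + (2 - vhat t) * lam t 3)
     - (\<Sum>J\<in>NN m Js. mu J)"

definition D_optimal :: "nat \<Rightarrow> (nat \<Rightarrow> real) \<Rightarrow> (nat \<Rightarrow> nat set) \<Rightarrow> (triple \<Rightarrow> real)
    \<Rightarrow> (triple \<Rightarrow> nat \<Rightarrow> real) \<Rightarrow> (nat set \<Rightarrow> real) \<Rightarrow> bool" where
  "D_optimal m alpha Js vhat lam mu \<longleftrightarrow>
     D_feasible m alpha Js lam mu \<and>
     (\<forall>lam' mu'. D_feasible m alpha Js lam' mu' \<longrightarrow>
        D_obj m Js vhat lam' mu' \<le> D_obj m Js vhat lam mu)"

end

theory Submission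
  imports Defs
begin

(* Setting all lambda to zero and mu_J to the negative part of beta_J gives a feasible point of
   D(v) whose objective is at least -eta, since the negative parts of the beta_J add up to at
   most the negative parts of the alpha_i. Hence the optimal objective is at least -eta. On the
   other hand, whenever v <= 1 every summand of minus the objective is nonnegative, and
   lambda_{t,3} resp. mu_J is dominated by one of them; so each of these is at most eta. *)

lemma finite_NN:
  assumes "\<forall>i\<in>{1..m}. finite (Js i)"
  shows "finite (NN m Js)"
proof -
  have "NN m Js \<subseteq> (\<Union>i\<in>{1..m}. Pow (Js i))"
    unfolding NN_def by auto
  then show ?thesis
    using assms by (auto intro: finite_subset)
qed

lemma finite_TT:
  assumes "finite (NN m Js)"
  shows "finite (TT m Js)"
proof -
  have "TT m Js \<subseteq> NN m Js \<times> NN m Js \<times> NN m Js"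
    unfolding TT_def NN_def by blast
  then show ?thesis
    using assms by (auto intro: finite_subset)
qed

lemma D_feasible_zero_lam:
  "D_feasible m alpha Js (\<lambda>_ _. 0) (\<lambda>J. max 0 (- beta m alpha Js J))"
  unfolding D_feasible_def by auto

lemma sum_neg_part_beta_le:
  assumes "finite (NN m Js)" and "\<forall>i\<in>{1..m}. Js i \<noteq> {}"
  shows "(\<Sum>J\<in>NN m Js. max 0 (- beta m alpha Js J)) \<le> - (\<Sum>i=1..m. min 0 (alpha i))"
proof -
  have "(\<Sum>J\<in>NN m Js. max 0 (- beta m alpha Js J))
      \<le> (\<Sum>J\<in>NN m Js. \<Sum>i\<in>{i\<in>{1..m}. Js i = J}. - min 0 (alpha i))"
  proof (rule sum_mono)
    fix J
    have "- beta m alpha Js J \<le> (\<Sum>i\<in>{i\<in>{1..m}. Js i = J}. - min 0 (alpha i))"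
      unfolding beta_def sum_negf[symmetric] by (rule sum_mono) auto
    moreover have "0 \<le> (\<Sum>i\<in>{i\<in>{1..m}. Js i = J}. - min 0 (alpha i))"
      by (rule sum_nonneg) auto
    ultimately show "max 0 (- beta m alpha Js J)
        \<le> (\<Sum>i\<in>{i\<in>{1..m}. Js i = J}. - min 0 (alpha i))"
      by simp
  qed
  also have "\<dots> = (\<Sum>i=1..m. - min 0 (alpha i))"
    using assms unfolding NN_def by (intro sum.group) auto
  finally show ?thesis
    by (simp add: sum_negf)
qed

lemma D_optimal_obj_ge:
  assumes "D_optimal m alpha Js vhat lam mu"
    and "finite (NN m Js)" and "\<forall>i\<in>{1..m}. Js i \<noteq> {}"
  shows "(\<Sum>i=1..m. min 0 (alpha i)) \<le> D_obj m Js vhat lam mu"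
proof -
  let ?mu0 = "\<lambda>J. max 0 (- beta m alpha Js J)"
  have "(\<Sum>i=1..m. min 0 (alpha i)) \<le> - (\<Sum>J\<in>NN m Js. ?mu0 J)"
    using sum_neg_part_beta_le[OF assms(2,3), where alpha = alpha] by linarith
  also have "\<dots> = D_obj m Js vhat (\<lambda>_ _. 0) ?mu0"
    unfolding D_obj_def by simp
  also have "\<dots> \<le> D_obj m Js vhat lam mu"
    using assms(1) D_feasible_zero_lam unfolding D_optimal_def by blast
  finally show ?thesis .
qed

lemma D_feasible_le_neg_obj:
  assumes feas: "D_feasible m alpha Js lam mu"
    and fin: "finite (NN m Js)"
    and vhat: "\<forall>t\<in>TT m Js. vhat t \<le> 1"
  shows "\<forall>t\<in>TT m Js. lam t 3 \<le> - D_obj m Js vhat lam mu"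
    and "\<forall>J\<in>NN m Js. mu J \<le> - D_obj m Js vhat lam mu"
proof -
  define cost where "cost t = (1 - vhat t) * (lam t 1 + lam t 2) + (2 - vhat t) * lam t 3" for t
  have lam_nonneg: "\<forall>k\<in>{1,2,3}. 0 \<le> lam t k" if "t \<in> TT m Js" for t
    using feas that unfolding D_feasible_def by auto
  have mu_nonneg: "0 \<le> mu J" if "J \<in> NN m Js" for J
    using feas that unfolding D_feasible_def by auto
  have lam3_le_cost: "lam t 3 \<le> cost t" if "t \<in> TT m Js" for t
  proof -
    have "0 \<le> (1 - vhat t) * (lam t 1 + lam t 2 + lam t 3)"
      using lam_nonneg[OF that] vhat that by simp
    also have "\<dots> = cost t - lam t 3"
      unfolding cost_def by (simp add: algebra_simps)
    finally show ?thesis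
      by simp
  qed
  have cost_nonneg: "0 \<le> cost t" if "t \<in> TT m Js" for t
    using lam3_le_cost[OF that] lam_nonneg[OF that] by fastforce
  have obj: "- D_obj m Js vhat lam mu = sum cost (TT m Js) + sum mu (NN m Js)"
    unfolding D_obj_def cost_def by simp
  have fin_T: "finite (TT m Js)"
    using finite_TT[OF fin] .
  show "\<forall>t\<in>TT m Js. lam t 3 \<le> - D_obj m Js vhat lam mu"
  proof
    fix t assume t: "t \<in> TT m Js"
    have "cost t \<le> sum cost (TT m Js)"
      using fin_T t cost_nonneg by (intro member_le_sum) auto
    moreover have "0 \<le> sum mu (NN m Js)"
      using mu_nonneg by (simp add: sum_nonneg)
    ultimately show "lam t 3 \<le> - D_obj m Js vhat lam mu"
      unfolding obj using lam3_le_cost[OF t] by linarith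
  qed
  show "\<forall>J\<in>NN m Js. mu J \<le> - D_obj m Js vhat lam mu"
  proof
    fix J assume J: "J \<in> NN m Js"
    have "mu J \<le> sum mu (NN m Js)"
      using fin J mu_nonneg by (intro member_le_sum) auto
    moreover have "0 \<le> sum cost (TT m Js)"
      using cost_nonneg by (simp add: sum_nonneg)
    ultimately show "mu J \<le> - D_obj m Js vhat lam mu"
      unfolding obj by linarith
  qed
qed

theorem lemma4:
  fixes n m :: nat and alpha :: "nat \<Rightarrow> real" and Js :: "nat \<Rightarrow> nat set"
    and T :: "triple set" and vhat :: "triple \<Rightarrow> real"
    and lam :: "triple \<Rightarrow> nat \<Rightarrow> real" and mu :: "nat set \<Rightarrow> real"
  assumes Js: "\<forall>i\<in>{1..m}. Js i \<noteq> {} \<and> Js i \<subseteq> {1..n}"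
    and proper: "proper_triple_set m Js T"
    and vhat: "\<forall>t\<in>TT m Js. vhat t = (if t \<in> T then 1 else 0)"
    and opt: "D_optimal m alpha Js vhat lam mu"
    and zero: "\<forall>t\<in>TT m Js. vhat t = 0 \<longrightarrow> lam t 1 = 0 \<and> lam t 2 = 0 \<and> lam t 3 = 0"
  shows "(\<forall>t\<in>TT m Js. lam t 3 \<le> - (\<Sum>i=1..m. min 0 (alpha i)))
       \<and> (\<forall>J\<in>NN m Js. mu J \<le> - (\<Sum>i=1..m. min 0 (alpha i)))"
proof -
  have fin: "finite (NN m Js)"
    using Js by (intro finite_NN) (auto intro: finite_subset)
  have vhat_le_1: "\<forall>t\<in>TT m Js. vhat t \<le> 1"
    using vhat by simp
  have feas: "D_feasible m alpha Js lam mu"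
    using opt unfolding D_optimal_def by blast
  have "(\<Sum>i=1..m. min 0 (alpha i)) \<le> D_obj m Js vhat lam mu"
    using D_optimal_obj_ge[OF opt fin] Js by blast
  then show ?thesis
    using D_feasible_le_neg_obj[OF feas fin vhat_le_1] by fastforce
qed

end
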